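(* Let $k \geq 3$ and $n \geq 2^{k-1}$ be integers, and let $A \subseteq \{1,2,\ldots,n\}$ be a set that contains no $k$-term geometric progression. Then \[ n - |A| \geq \left( \frac{1}{2^k -1} + \frac{2}{5}\left( \frac{1}{5^{k-1} } - \frac{1}{6^{k-1}} \right) + \frac{4}{15}\left( \frac{1}{7^{k-1} } - \frac{1}{10^{k-1}} \right) \right) n + O\left(\frac{\log n}{k} \right), \] where the implied constant in the $O$-term is absolute (independent of $n$, $k$ and $A$).
   Context: A geometric progression of length $k$ with common ratio $r$, where $r \neq 0, \pm 1$ is a real number, is a sequence $(a_0, a_1, \ldots, a_{k-1})$ of nonzero real numbers with $a_i/a_{i-1} = r$ for $i = 1, \ldots, k-1$. A $k$-term (or $k$-) geometric progression is a geometric progression of length $k$ with some common ratio $r$. A set contains no $k$-term geometric progression if it does not contain numbers $a_0, \ldots, a_{k-1}$ such that $(a_0, \ldots, a_{k-1})$ is a $k$-term geometric progression. *)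

theory Defs
  imports Complex_Main
begin

definition is_geom_prog :: "nat \<Rightarrow> real \<Rightarrow> (nat \<Rightarrow> real) \<Rightarrow> bool" where
  "is_geom_prog k r a \<longleftrightarrow> r \<noteq> 0 \<and> r \<noteq> 1 \<and> r \<noteq> -1 \<and>
     (\<forall>i<k. a i \<noteq> 0) \<and> (\<forall>i. 1 \<le> i \<and> i < k \<longrightarrow> a i / a (i - 1) = r)"

definition contains_k_GP :: "nat \<Rightarrow> real set \<Rightarrow> bool" where
  "contains_k_GP k S \<longleftrightarrow> (\<exists>r a. is_geom_prog k r a \<and> (\<forall>i<k. a i \<in> S))"

definition gp_const :: "nat \<Rightarrow> real" where
  "gp_const k = 1 / (2 ^ k - 1)
     + 2 / 5 * (1 / 5 ^ (k - 1) - 1 / 6 ^ (k - 1))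
     + 4 / 15 * (1 / 7 ^ (k - 1) - 1 / 10 ^ (k - 1))"

end

theory Submission
  imports Defs "HOL-Number_Theory.Totient" "HOL-Library.Disjoint_Sets"
begin

text \<open>Every \<open>k\<close>-term geometric progression in \<open>{1..n}\<close> has a term outside \<open>A\<close>, so \<open>n - |A|\<close>
  is at least the size of any family of pairwise disjoint \<open>k\<close>-term progressions in \<open>{1..n}\<close>.
  Three such families are combined:
  \<^item> cutting each chain \<open>m, 2m, 4m, \<dots>\<close> (\<open>m\<close> odd) into consecutive blocks of length \<open>k\<close> gives
    about \<open>n / (2^k - 1)\<close> progressions of ratio \<open>2\<close>;
  \<^item> \<open>3^(k-1) c, \<dots>, 5^(k-1) c\<close> (ratio \<open>5/3\<close>) for \<open>c\<close> coprime to \<open>10\<close> with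
    \<open>n / 6^(k-1) < c \<le> n / 5^(k-1)\<close>;
  \<^item> \<open>7^(k-1) c, \<dots>, 5^(k-1) c\<close> (ratio \<open>5/7\<close>) for \<open>c\<close> coprime to \<open>30\<close> with
    \<open>n / 10^(k-1) < c \<le> n / 7^(k-1)\<close>.
  Terms of the last two families are odd and exceed \<open>n / 2^(k-1)\<close>, which no odd term of the
  first family does; the \<open>5\<close>-adic valuation of a term fixes its position, which keeps the last
  two families disjoint. Counting residues coprime to \<open>10\<close> and \<open>30\<close> gives the densities \<open>2/5\<close>
  and \<open>4/15\<close>, and using only \<open>J \<approx> log\<^sub>2 n / k\<close> dyadic levels costs \<open>O(J) = O(log n / k)\<close>.\<close>

lemma card_le_card_diff_if_disjoint_GPs:
  fixes g :: "'i \<Rightarrow> nat \<Rightarrow> nat"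
  assumes no_GP: "\<not> contains_k_GP k (real ` A)" and "finite S"
    and GP: "\<And>i. i \<in> I \<Longrightarrow> \<exists>r. is_geom_prog k r (\<lambda>t. real (g i t))"
    and in_S: "\<And>i. i \<in> I \<Longrightarrow> g i ` {..<k} \<subseteq> S"
    and disj: "disjoint_family_on (\<lambda>i. g i ` {..<k}) I"
  shows "card I \<le> card (S - A)"
proof -
  have "\<exists>t<k. g i t \<notin> A" if "i \<in> I" for i
    using GP[OF that] no_GP unfolding contains_k_GP_def by blast
  then obtain \<tau> where \<tau>: "\<And>i. i \<in> I \<Longrightarrow> \<tau> i < k \<and> g i (\<tau> i) \<notin> A"
    by metis
  have "inj_on (\<lambda>i. g i (\<tau> i)) I"
  proof (rule inj_onI)
    fix i j assume "i \<in> I" "j \<in> I" "g i (\<tau> i) = g j (\<tau> j)"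
    then have "g i ` {..<k} \<inter> g j ` {..<k} \<noteq> {}"
      using \<tau> by blast
    then show "i = j"
      using disjoint_family_onD[OF disj \<open>i \<in> I\<close> \<open>j \<in> I\<close>] by blast
  qed
  moreover have "(\<lambda>i. g i (\<tau> i)) ` I \<subseteq> S - A"
    using \<tau> in_S by blast
  ultimately show ?thesis
    using card_inj_on_le \<open>finite S\<close> by blast
qed

lemma disjoint_family_on_Plus:
  assumes "disjoint_family_on F A" "disjoint_family_on G B"
    and "\<And>a b. a \<in> A \<Longrightarrow> b \<in> B \<Longrightarrow> F a \<inter> G b = {}"
  shows "disjoint_family_on (case_sum F G) (A <+> B)"
  unfolding disjoint_family_on_def
proof (intro ballI impI)
  fix i j assume "i \<in> A <+> B" "j \<in> A <+> B" "i \<noteq> j"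
  then show "case_sum F G i \<inter> case_sum F G j = {}"
    using assms unfolding disjoint_family_on_def by (elim PlusE) (auto simp: Int_commute)
qed

lemma pow_mult_cancel:
  fixes p :: nat
  assumes "p \<noteq> 0" "\<not> p dvd x" "\<not> p dvd y" "p ^ a * x = p ^ b * y"
  shows "a = b \<and> x = y"
proof -
  have "a = b"
    using multiplicity_decomposeI[of "p ^ a * x" p a x] multiplicity_decomposeI[of "p ^ b * y" p b y]
      assms by simp
  with assms show ?thesis
    by simp
qed

lemma not_dvd_if_coprime:
  assumes "coprime c m" "p dvd m" "prime p"
  shows "\<not> p dvd c"
  using assms coprime_common_divisor not_prime_unit by blast

lemma of_nat_div_ge: "real n / real d - 1 \<le> real (n div d)"
proof (cases "d = 0")
  case False
  then have "real (n mod d) / real d \<le> 1"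
    by simp
  then show ?thesis
    using of_nat_of_nat_div_aux[where 'a = real, of n d] by linarith
qed simp

section \<open>Geometric progressions of integers\<close>

definition geom_seq :: "nat \<Rightarrow> nat \<Rightarrow> nat \<Rightarrow> nat \<Rightarrow> nat \<Rightarrow> nat" where
  "geom_seq k p q c t = p ^ (k - 1 - t) * q ^ t * c"

lemma is_geom_prog_geom_seq:
  assumes "0 < p" "0 < q" "p \<noteq> q" "0 < c"
  shows "is_geom_prog k (real q / real p) (\<lambda>t. real (geom_seq k p q c t))"
  unfolding is_geom_prog_def
proof (intro conjI allI impI)
  show "real q / real p \<noteq> 0" "real q / real p \<noteq> 1"
    using assms by simp_all
  have "0 \<le> real q / real p"
    by simp
  then show "real q / real p \<noteq> -1"
    by linarith
  show "real (geom_seq k p q c i) \<noteq> 0" for i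
    using assms by (simp add: geom_seq_def)
next
  fix i assume i: "1 \<le> i \<and> i < k"
  then obtain j where j: "i = Suc j"
    by (cases i) auto
  with i have pow: "p ^ (k - 1 - j) = p * p ^ (k - 1 - Suc j)"
    by (simp flip: power_Suc add: Suc_diff_Suc)
  show "real (geom_seq k p q c i) / real (geom_seq k p q c (i - 1)) = real q / real p"
    unfolding geom_seq_def j diff_Suc_1 pow power_Suc using assms by (simp add: field_simps)
qed

lemma geom_seq_ge:
  assumes "t < k" "a \<le> p" "a \<le> q"
  shows "a ^ (k - 1) * c \<le> geom_seq k p q c t"
proof -
  have "a ^ (k - 1) = a ^ (k - 1 - t) * a ^ t"
    using assms(1) by (simp flip: power_add)
  also have "\<dots> \<le> p ^ (k - 1 - t) * q ^ t"
    using assms(2,3) by (intro mult_mono power_mono) auto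
  finally show ?thesis
    unfolding geom_seq_def by simp
qed

lemma geom_seq_le:
  assumes "t < k" "p \<le> b" "q \<le> b"
  shows "geom_seq k p q c t \<le> b ^ (k - 1) * c"
proof -
  have "p ^ (k - 1 - t) * q ^ t \<le> b ^ (k - 1 - t) * b ^ t"
    using assms(2,3) by (intro mult_mono power_mono) auto
  also have "\<dots> = b ^ (k - 1)"
    using assms(1) by (simp flip: power_add)
  finally show ?thesis
    unfolding geom_seq_def by simp
qed

lemma geom_seq_eqD:
  assumes "prime q" "\<not> q dvd p" "\<not> q dvd p'" "\<not> q dvd c" "\<not> q dvd c'"
    and "geom_seq k p q c t = geom_seq k p' q c' t'"
  shows "t = t' \<and> p ^ (k - 1 - t) * c = p' ^ (k - 1 - t') * c'"
proof (rule pow_mult_cancel)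
  show "q \<noteq> 0"
    using \<open>prime q\<close> by auto
  show "\<not> q dvd p ^ (k - 1 - t) * c" "\<not> q dvd p' ^ (k - 1 - t') * c'"
    using assms(1-5) by (auto simp: prime_dvd_mult_iff dest: prime_dvd_power)
  show "q ^ t * (p ^ (k - 1 - t) * c) = q ^ t' * (p' ^ (k - 1 - t') * c')"
    using assms(6) by (simp add: geom_seq_def ac_simps)
qed

lemma disjoint_family_on_geom_seq:
  assumes "prime q" "\<not> q dvd p" "0 < p" "\<And>c. c \<in> C \<Longrightarrow> \<not> q dvd c"
  shows "disjoint_family_on (\<lambda>c. geom_seq k p q c ` {..<k}) C"
  unfolding disjoint_family_on_def
proof (intro ballI impI)
  fix c c' assume "c \<in> C" "c' \<in> C" "c \<noteq> c'"
  show "geom_seq k p q c ` {..<k} \<inter> geom_seq k p q c' ` {..<k} = {}"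
  proof (rule ccontr)
    assume "geom_seq k p q c ` {..<k} \<inter> geom_seq k p q c' ` {..<k} \<noteq> {}"
    then obtain t t' where "geom_seq k p q c t = geom_seq k p q c' t'"
      by blast
    then have "p ^ (k - 1 - t) * c = p ^ (k - 1 - t) * c'"
      using geom_seq_eqD[of q p p c c'] assms \<open>c \<in> C\<close> \<open>c' \<in> C\<close> by auto
    then show False
      using \<open>0 < p\<close> \<open>c \<noteq> c'\<close> by simp
  qed
qed

section \<open>Integers coprime to a modulus in an interval\<close>

definition coprime_window :: "nat \<Rightarrow> nat \<Rightarrow> nat \<Rightarrow> nat set" where
  "coprime_window m a b = {c. a < c \<and> c \<le> b \<and> coprime c m}"

lemma finite_coprime_window [simp]: "finite (coprime_window m a b)"
  by (rule finite_subset[of _ "{..b}"]) (auto simp: coprime_window_def)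

lemma card_coprime_window_ge:
  assumes "1 < m"
  shows "real (totient m) * ((real b - real a) / real m - 2) \<le> real (card (coprime_window m a b))"
proof -
  define J where "J = {a div m + 1..<b div m}"
  define f where "f = (\<lambda>(j, s). m * j + s)"
  have "inj_on f (J \<times> totatives m)"
  proof (rule inj_onI, clarify)
    fix j s j' s' assume "s \<in> totatives m" "s' \<in> totatives m" "f (j, s) = f (j', s')"
    then have "s < m" "s' < m" "m * j + s = m * j' + s'"
      using totatives_less assms by (auto simp: f_def)
    moreover from this have "s = s'"
      by (metis mod_mult_self3 mod_less mult.commute)
    ultimately show "j = j' \<and> s = s'"
      using assms by simp
  qed
  moreover have "f ` (J \<times> totatives m) \<subseteq> coprime_window m a b"
  proof clarify
    fix j s assume "j \<in> J" "s \<in> totatives m"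
    then have s: "s < m" "coprime s m"
      using totatives_less[OF _ assms] by (auto simp: in_totatives_iff)
    have "a < m * (a div m) + m"
      using mult_div_mod_eq[of m a] mod_less_divisor[of m a] assms by linarith
    then have "a < m * (a div m + 1)"
      by simp
    also have "\<dots> \<le> m * j"
      using \<open>j \<in> J\<close> by (intro mult_le_mono2) (simp add: J_def)
    finally have "a < m * j + s"
      by simp
    have "m * j + s \<le> m * (j + 1)"
      using s(1) by simp
    also have "\<dots> \<le> m * (b div m)"
      using \<open>j \<in> J\<close> by (intro mult_le_mono2) (simp add: J_def)
    also have "\<dots> \<le> b"
      by simp
    finally have "m * j + s \<le> b" .
    moreover have "coprime (m * j + s) m"
      using s(2) by (simp add: coprime_iff_gcd_eq_1 gcd.commute[of _ m] gcd_add_mult mult.commute)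
    ultimately show "f (j, s) \<in> coprime_window m a b"
      using \<open>a < m * j + s\<close> by (simp add: f_def coprime_window_def)
  qed
  ultimately have "card (J \<times> totatives m) \<le> card (coprime_window m a b)"
    by (intro card_inj_on_le) auto
  then have "real (totient m) * real (card J) \<le> real (card (coprime_window m a b))"
    by (simp add: card_cartesian_product totient_def mult.commute flip: of_nat_mult)
  moreover have "(real b - real a) / real m - 2 \<le> real (card J)"
  proof -
    have "real (b div m) - real (a div m) - 1 \<le> real (card J)"
      by (simp add: J_def)
    then show ?thesis
      using of_nat_div_ge[of b m] of_nat_div_le_of_nat[where 'a = real, of a m]
      by (simp add: diff_divide_distrib)
  qed
  then have "real (totient m) * ((real b - real a) / real m - 2) \<le> real (totient m) * real (card J)"
    by (intro mult_left_mono) simp_all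
  ultimately show ?thesis
    by linarith
qed

lemma card_coprime_window_div_ge:
  assumes "1 < m"
  shows "real (totient m) / real m * (real n / real b - real n / real a) - 3 * real (totient m)
    \<le> real (card (coprime_window m (n div a) (n div b)))"
proof -
  define D where "D = real n / real b - real n / real a"
  have "1 / real m \<le> 1"
    using assms by simp
  then have "D / real m - 1 \<le> (D - 1) / real m"
    by (simp add: diff_divide_distrib)
  also have "\<dots> \<le> (real (n div b) - real (n div a)) / real m"
    using of_nat_div_ge[of n b] of_nat_div_le_of_nat[where 'a = real, of n a]
    by (intro divide_right_mono) (simp_all add: D_def)
  finally have scaled: "D / real m - 1 \<le> (real (n div b) - real (n div a)) / real m" .
  have "real (totient m) / real m * D - 3 * real (totient m) = real (totient m) * (D / real m - 1 - 2)"
    by (simp add: algebra_simps)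
  also have "\<dots> \<le> real (totient m) * ((real (n div b) - real (n div a)) / real m - 2)"
    using scaled by (intro mult_left_mono) auto
  also have "\<dots> \<le> real (card (coprime_window m (n div a) (n div b)))"
    by (rule card_coprime_window_ge[OF assms])
  finally show ?thesis
    by (simp only: D_def)
qed

lemma totient_10: "totient 10 = 4"
  using totient_double[of 5] totient_prime[of 5] by simp

lemma totient_30: "totient 30 = 8"
proof -
  have "totient 15 = totient 3 * totient 5"
    using totient_mult_coprime[of 3 5] primes_coprime[of "3::nat" 5] by simp
  then show ?thesis
    using totient_double[of 15] totient_prime[of 5] totient_prime[of 3] by simp
qed

section \<open>The dyadic blocks\<close>

fun dyadic_block :: "nat \<Rightarrow> nat \<times> nat \<Rightarrow> nat \<Rightarrow> nat" where
  "dyadic_block k (j, m) t = 2 ^ (j * k + t) * m"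

definition dyadic_index :: "nat \<Rightarrow> nat \<Rightarrow> nat \<Rightarrow> (nat \<times> nat) set" where
  "dyadic_index k n J = (SIGMA j:{..<J}. coprime_window 2 0 (n div 2 ^ (j * k + k - 1)))"

lemma is_geom_prog_dyadic_block:
  assumes "i \<in> dyadic_index k n J"
  shows "is_geom_prog k 2 (\<lambda>t. real (dyadic_block k i t))"
proof -
  obtain j m where i: "i = (j, m)" and "0 < m"
    using assms by (auto simp: dyadic_index_def coprime_window_def)
  moreover have "dyadic_block k (j, m) t = geom_seq k 1 2 (2 ^ (j * k) * m) t" for t
    by (simp add: geom_seq_def power_add)
  ultimately show ?thesis
    using is_geom_prog_geom_seq[of 1 2 "2 ^ (j * k) * m" k] by simp
qed

lemma dyadic_block_bounds:
  assumes "i \<in> dyadic_index k n J" "t < k"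
  shows "dyadic_block k i t \<in> {1..n}"
    and "odd (dyadic_block k i t) \<Longrightarrow> 2 ^ (k - 1) * dyadic_block k i t \<le> n"
proof -
  obtain j m where i: "i = (j, m)" and m: "odd m" "2 ^ (j * k + k - 1) * m \<le> n"
    using assms(1) by (auto simp: dyadic_index_def coprime_window_def less_eq_div_iff_mult_less_eq
        mult.commute)
  have "2 ^ (j * k + t) * m \<le> 2 ^ (j * k + k - 1) * m"
    using assms(2) by (intro mult_le_mono1 power_increasing) auto
  then have "2 ^ (j * k + t) * m \<le> n"
    using m(2) by linarith
  with m show "dyadic_block k i t \<in> {1..n}"
    by (auto simp: i Suc_le_eq odd_pos)
  assume "odd (dyadic_block k i t)"
  then have jk: "j * k = 0" and t: "t = 0"
    by (cases "j * k + t"; simp add: i)+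
  show "2 ^ (k - 1) * dyadic_block k i t \<le> n"
    using m(2) unfolding i dyadic_block.simps jk t by simp
qed

lemma disjoint_family_on_dyadic_block:
  "disjoint_family_on (\<lambda>i. dyadic_block k i ` {..<k}) (dyadic_index k n J)"
  unfolding disjoint_family_on_def
proof (intro ballI impI)
  fix i i' assume "i \<in> dyadic_index k n J" "i' \<in> dyadic_index k n J" "i \<noteq> i'"
  then obtain j m j' m' where i: "i = (j, m)" "i' = (j', m')" "odd m" "odd m'"
    by (auto simp: dyadic_index_def coprime_window_def)
  show "dyadic_block k i ` {..<k} \<inter> dyadic_block k i' ` {..<k} = {}"
  proof (rule ccontr)
    assume "dyadic_block k i ` {..<k} \<inter> dyadic_block k i' ` {..<k} \<noteq> {}"
    then obtain t t' where "t < k" "t' < k" "2 ^ (j * k + t) * m = 2 ^ (j' * k + t') * m'"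
      using i by auto
    then have "j * k + t = j' * k + t'" "m = m'"
      using pow_mult_cancel[of 2 m m'] i by auto
    then have "(j * k + t) div k = (j' * k + t') div k"
      by simp
    with \<open>t < k\<close> \<open>t' < k\<close> have "j = j'"
      by simp
    then show False
      using i \<open>m = m'\<close> \<open>i \<noteq> i'\<close> by simp
  qed
qed

lemma sum_inverse_powers:
  fixes x :: real
  assumes "1 < x"
  shows "(\<Sum>j<J. 1 / x ^ Suc j) = (1 - 1 / x ^ J) / (x - 1)"
proof (induction J)
  case (Suc J)
  then have "(\<Sum>j<Suc J. 1 / x ^ Suc j) = (1 - 1 / x ^ J) / (x - 1) + 1 / x ^ Suc J"
    by simp
  also have "\<dots> = (1 - 1 / x ^ Suc J) / (x - 1)"
    using assms by (simp add: field_simps)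
  finally show ?case .
qed simp

lemma sum_inverse_powers_ge:
  fixes x y :: real
  assumes "2 \<le> x" "0 \<le> y" "y \<le> x ^ J"
  shows "y / (x - 1) - 1 \<le> y * (\<Sum>j<J. 1 / x ^ Suc j)"
proof -
  have "1 < x"
    using assms(1) by simp
  then have "y * (\<Sum>j<J. 1 / x ^ Suc j) = y / (x - 1) - y / x ^ J / (x - 1)"
    unfolding sum_inverse_powers[OF \<open>1 < x\<close>] by (simp add: diff_divide_distrib right_diff_distrib)
  moreover have "y / x ^ J / (x - 1) \<le> y / x ^ J / 1"
    using assms(1,2) by (intro divide_left_mono) auto
  moreover have "y / x ^ J \<le> 1"
    using assms by simp
  ultimately show ?thesis
    unfolding div_by_1 by linarith
qed

lemma card_dyadic_index_ge:
  assumes "0 < k" "n \<le> 2 ^ (k * J)"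
  shows "real n / (2 ^ k - 1) - 1 - 3 * real J \<le> real (card (dyadic_index k n J))"
proof -
  have level: "real n / (2 ^ k) ^ Suc j - 3
      \<le> real (card (coprime_window 2 0 (n div 2 ^ (j * k + k - 1))))" for j
  proof -
    have "2 * 2 ^ (j * k + k - 1) = ((2::nat) ^ k) ^ Suc j"
      using assms(1) by (simp flip: power_Suc power_mult add: mult.commute)
    then have "real (2 * 2 ^ (j * k + k - 1)) = (2 ^ k) ^ Suc j"
      by (metis of_nat_numeral of_nat_power)
    then show ?thesis
      using card_coprime_window_div_ge[of 2 n "2 ^ (j * k + k - 1)" 0]
      by simp \<comment> \<open>uses \<open>n div 0 = 0\<close> and \<open>n / 0 = 0\<close>\<close>
  qed
  have "(2::real) \<le> 2 ^ k"
    using power_increasing[of 1 k "2::real"] assms(1) by simp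
  moreover have "real n \<le> (2 ^ k) ^ J"
    using assms(2) by (metis of_nat_le_iff of_nat_numeral of_nat_power power_mult)
  ultimately have "real n / (2 ^ k - 1) - 1 - 3 * real J
      \<le> real n * (\<Sum>j<J. 1 / (2 ^ k) ^ Suc j) - 3 * real J"
    using sum_inverse_powers_ge[of "2 ^ k" "real n" J] by simp
  also have "\<dots> = (\<Sum>j<J. real n / (2 ^ k) ^ Suc j - 3)"
    by (simp add: sum_subtractf sum_distrib_left)
  also have "\<dots> \<le> real (card (dyadic_index k n J))"
    using level by (simp add: dyadic_index_def sum_mono)
  finally show ?thesis .
qed

section \<open>The progressions of ratio 5/3 and 5/7\<close>

lemma geom_seq_window_bounds:
  assumes "c \<in> coprime_window m (n div (2 * a) ^ (k - 1)) (n div b ^ (k - 1))" "t < k"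
    and "0 < a" "a \<le> p" "a \<le> q" "p \<le> b" "q \<le> b"
  shows "geom_seq k p q c t \<in> {1..n}" "n < 2 ^ (k - 1) * geom_seq k p q c t"
proof -
  have c: "n < (2 * a) ^ (k - 1) * c" "b ^ (k - 1) * c \<le> n"
    using assms(1,3-7) by (auto simp: coprime_window_def div_less_iff_less_mult
        less_eq_div_iff_mult_less_eq mult.commute)
  have lower: "a ^ (k - 1) * c \<le> geom_seq k p q c t"
    using geom_seq_ge assms by blast
  have "0 < c"
    using c(1) by (cases c) auto
  with \<open>0 < a\<close> have "1 \<le> a ^ (k - 1) * c"
    by (simp add: Suc_le_eq)
  with lower have "1 \<le> geom_seq k p q c t"
    by linarith
  moreover have "geom_seq k p q c t \<le> n"
    using order.trans[OF geom_seq_le[OF assms(2,6,7)] c(2)] .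
  ultimately show "geom_seq k p q c t \<in> {1..n}"
    by simp
  have "n < 2 ^ (k - 1) * (a ^ (k - 1) * c)"
    using c(1) by (simp add: power_mult_distrib mult.assoc)
  also have "\<dots> \<le> 2 ^ (k - 1) * geom_seq k p q c t"
    using lower by simp
  finally show "n < 2 ^ (k - 1) * geom_seq k p q c t" .
qed

definition index_3_5 :: "nat \<Rightarrow> nat \<Rightarrow> nat set" where
  "index_3_5 k n = coprime_window 10 (n div 6 ^ (k - 1)) (n div 5 ^ (k - 1))"

definition index_7_5 :: "nat \<Rightarrow> nat \<Rightarrow> nat set" where
  "index_7_5 k n = coprime_window 30 (n div 10 ^ (k - 1)) (n div 7 ^ (k - 1))"

lemma index_3_5_7_5_elemD:
  assumes "c \<in> index_3_5 k n \<union> index_7_5 k n"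
  shows "0 < c" "odd c" "\<not> 5 dvd c"
  using assms not_dvd_if_coprime[of c 10 5] not_dvd_if_coprime[of c 30 5]
  by (auto simp: index_3_5_def index_7_5_def coprime_window_def)

lemma index_3_5_bounds:
  assumes "c \<in> index_3_5 k n" "t < k"
  shows "geom_seq k 3 5 c t \<in> {1..n}" "n < 2 ^ (k - 1) * geom_seq k 3 5 c t"
  using geom_seq_window_bounds[of c 10 n 3 k 5 t 3 5] assms by (simp_all add: index_3_5_def)

lemma index_7_5_bounds:
  assumes "c \<in> index_7_5 k n" "t < k"
  shows "geom_seq k 7 5 c t \<in> {1..n}" "n < 2 ^ (k - 1) * geom_seq k 7 5 c t"
  using geom_seq_window_bounds[of c 30 n 5 k 7 t 7 5] assms by (simp_all add: index_7_5_def)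

lemma disjoint_index_3_5_index_7_5:
  assumes "c \<in> index_3_5 k n" "c' \<in> index_7_5 k n"
  shows "geom_seq k 3 5 c ` {..<k} \<inter> geom_seq k 7 5 c' ` {..<k} = {}"
proof (rule ccontr)
  assume "geom_seq k 3 5 c ` {..<k} \<inter> geom_seq k 7 5 c' ` {..<k} \<noteq> {}"
  then obtain t t' where eq: "geom_seq k 3 5 c t = geom_seq k 7 5 c' t'"
    by blast
  have c: "coprime c 10" "n div 6 ^ (k - 1) < c"
    using assms(1) by (simp_all add: index_3_5_def coprime_window_def)
  have c': "coprime c' 30" "c' \<le> n div 7 ^ (k - 1)"
    using assms(2) by (simp_all add: index_7_5_def coprime_window_def)
  have "\<not> 5 dvd c" "\<not> 5 dvd c'" "\<not> 3 dvd c'"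
    using not_dvd_if_coprime[of c 10 5] not_dvd_if_coprime[of c' 30 5] not_dvd_if_coprime[of c' 30 3]
      c(1) c'(1) by simp_all
  then obtain s where s: "3 ^ s * c = 7 ^ s * c'"
    using geom_seq_eqD[OF _ _ _ _ _ eq] by auto
  have "s = 0"
  proof (rule ccontr)
    assume "s \<noteq> 0"
    then have "3 dvd 3 ^ s * c"
      by simp
    then have "3 dvd (7::nat) ^ s"
      using s \<open>\<not> 3 dvd c'\<close> by (simp add: prime_dvd_mult_iff)
    then show False
      using prime_dvd_power[of "3::nat" 7 s] by simp
  qed
  with s have "c = c'"
    by simp
  moreover have "n div 7 ^ (k - 1) \<le> n div 6 ^ (k - 1)"
    by (intro div_le_mono2) (auto intro: power_mono)
  ultimately show False
    using c(2) c'(2) by simp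
qed

definition gp_block_index :: "nat \<Rightarrow> nat \<Rightarrow> nat \<Rightarrow> ((nat \<times> nat) + nat + nat) set" where
  "gp_block_index k n J = dyadic_index k n J <+> (index_3_5 k n <+> index_7_5 k n)"

definition gp_block :: "nat \<Rightarrow> (nat \<times> nat) + nat + nat \<Rightarrow> nat \<Rightarrow> nat" where
  "gp_block k = case_sum (dyadic_block k) (case_sum (geom_seq k 3 5) (geom_seq k 7 5))"

lemma is_geom_prog_gp_block:
  assumes "i \<in> gp_block_index k n J"
  shows "\<exists>r. is_geom_prog k r (\<lambda>t. real (gp_block k i t))"
proof -
  have GP_3_5: "is_geom_prog k (real 5 / real 3) (\<lambda>t. real (geom_seq k 3 5 c t))"
    if "c \<in> index_3_5 k n" for c
    using that index_3_5_7_5_elemD by (intro is_geom_prog_geom_seq) auto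
  have GP_7_5: "is_geom_prog k (real 5 / real 7) (\<lambda>t. real (geom_seq k 7 5 c t))"
    if "c \<in> index_7_5 k n" for c
    using that index_3_5_7_5_elemD by (intro is_geom_prog_geom_seq) auto
  show ?thesis
    using assms is_geom_prog_dyadic_block GP_3_5 GP_7_5 unfolding gp_block_index_def gp_block_def
    by (elim PlusE) (simp_all del: dyadic_block.simps; blast)+
qed

lemma gp_block_in_range:
  assumes "i \<in> gp_block_index k n J"
  shows "gp_block k i ` {..<k} \<subseteq> {1..n}"
  using assms dyadic_block_bounds(1) index_3_5_bounds(1) index_7_5_bounds(1)
  unfolding gp_block_index_def gp_block_def by (elim PlusE) auto

lemma disjoint_family_on_gp_block:
  "disjoint_family_on (\<lambda>i. gp_block k i ` {..<k}) (gp_block_index k n J)"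
proof -
  have images: "(\<lambda>i. gp_block k i ` {..<k}) = case_sum (\<lambda>i. dyadic_block k i ` {..<k})
      (case_sum (\<lambda>c. geom_seq k 3 5 c ` {..<k}) (\<lambda>c. geom_seq k 7 5 c ` {..<k}))"
    by (simp add: gp_block_def fun_eq_iff split: sum.split)
  have dyadic_disjoint: "dyadic_block k i ` {..<k} \<inter> geom_seq k p 5 c ` {..<k} = {}"
    if "i \<in> dyadic_index k n J" "odd p" "odd c"
      and "\<And>t. t < k \<Longrightarrow> n < 2 ^ (k - 1) * geom_seq k p 5 c t" for i p c
    using that dyadic_block_bounds(2)[OF that(1)] by (fastforce simp: geom_seq_def)
  show ?thesis
    unfolding images gp_block_index_def
  proof (intro disjoint_family_on_Plus)
    show "disjoint_family_on (\<lambda>c. geom_seq k 3 5 c ` {..<k}) (index_3_5 k n)"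
      using index_3_5_7_5_elemD(3) by (intro disjoint_family_on_geom_seq) auto
    show "disjoint_family_on (\<lambda>c. geom_seq k 7 5 c ` {..<k}) (index_7_5 k n)"
      using index_3_5_7_5_elemD(3) by (intro disjoint_family_on_geom_seq) auto
    show "dyadic_block k i ` {..<k} \<inter> case_sum (\<lambda>c. geom_seq k 3 5 c ` {..<k})
        (\<lambda>c. geom_seq k 7 5 c ` {..<k}) c = {}"
      if "i \<in> dyadic_index k n J" "c \<in> index_3_5 k n <+> index_7_5 k n" for i c
      using that(2)
    proof (elim PlusE)
      fix c' assume "c' \<in> index_3_5 k n" "c = Inl c'"
      then show ?thesis
        using dyadic_disjoint[OF that(1), of 3 c'] index_3_5_7_5_elemD(2)[of c' k n]
          index_3_5_bounds(2) by simp
    next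
      fix c' assume "c' \<in> index_7_5 k n" "c = Inr c'"
      then show ?thesis
        using dyadic_disjoint[OF that(1), of 7 c'] index_3_5_7_5_elemD(2)[of c' k n]
          index_7_5_bounds(2) by simp
    qed
  qed (fact disjoint_family_on_dyadic_block disjoint_index_3_5_index_7_5)+
qed

lemma card_gp_block_index_le:
  assumes "\<not> contains_k_GP k (real ` A)" "A \<subseteq> {1..n}"
  shows "card (dyadic_index k n J) + card (index_3_5 k n) + card (index_7_5 k n) \<le> n - card A"
proof -
  have "card (gp_block_index k n J) \<le> card ({1..n} - A)"
    using is_geom_prog_gp_block gp_block_in_range disjoint_family_on_gp_block
    by (intro card_le_card_diff_if_disjoint_GPs[OF assms(1) finite_atLeastAtMost])
  moreover have "card (gp_block_index k n J)
      = card (dyadic_index k n J) + card (index_3_5 k n) + card (index_7_5 k n)"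
    by (simp add: gp_block_index_def card_Plus dyadic_index_def index_3_5_def index_7_5_def)
  moreover have "card ({1..n} - A) = n - card A"
    using assms(2) by (simp add: card_Diff_subset finite_subset)
  ultimately show ?thesis
    by simp
qed

lemma GP_free_complement_ge:
  assumes "0 < k" "n \<le> 2 ^ (k * J)" "\<not> contains_k_GP k (real ` A)" "A \<subseteq> {1..n}"
  shows "gp_const k * real n - 37 - 3 * real J \<le> real n - real (card A)"
proof -
  have "2 / 5 * (real n / 5 ^ (k - 1) - real n / 6 ^ (k - 1)) - 12 \<le> real (card (index_3_5 k n))"
    using card_coprime_window_div_ge[of 10 n "5 ^ (k - 1)" "6 ^ (k - 1)"]
    by (simp add: index_3_5_def totient_10)
  moreover have "4 / 15 * (real n / 7 ^ (k - 1) - real n / 10 ^ (k - 1)) - 24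
      \<le> real (card (index_7_5 k n))"
    using card_coprime_window_div_ge[of 30 n "7 ^ (k - 1)" "10 ^ (k - 1)"]
    by (simp add: index_7_5_def totient_30)
  moreover have "real (card (dyadic_index k n J)) + real (card (index_3_5 k n))
      + real (card (index_7_5 k n)) \<le> real n - real (card A)"
  proof -
    have "card A \<le> n"
      using card_mono[OF _ assms(4)] by simp
    then show ?thesis
      using card_gp_block_index_le[OF assms(3,4), of J] by (simp add: of_nat_diff flip: of_nat_add)
  qed
  moreover have "gp_const k * real n = real n / (2 ^ k - 1)
      + 2 / 5 * (real n / 5 ^ (k - 1) - real n / 6 ^ (k - 1))
      + 4 / 15 * (real n / 7 ^ (k - 1) - real n / 10 ^ (k - 1))"
    by (simp add: gp_const_def algebra_simps)
  ultimately show ?thesis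
    using card_dyadic_index_ge[OF assms(1,2)] by linarith
qed

lemma exists_dyadic_levels:
  assumes "0 < k" "0 < n"
  obtains J where "n \<le> 2 ^ (k * J)" "real J < 1 + ln (real n) / (real k * ln 2)"
proof -
  have "n < 2 ^ n"
    by (rule less_exp)
  also have "(2::nat) ^ n \<le> 2 ^ (k * n)"
    using assms(1) by (intro power_increasing) auto
  finally have ex: "\<exists>J. n \<le> 2 ^ (k * J)"
    by (intro exI[of _ n]) simp
  define J where "J = (LEAST J. n \<le> 2 ^ (k * J))"
  have "n \<le> 2 ^ (k * J)"
    unfolding J_def using LeastI_ex[OF ex] .
  moreover have "real J < 1 + ln (real n) / (real k * ln 2)"
  proof (cases J)
    case 0
    have "0 \<le> ln (real n) / (real k * ln 2)"
      using assms by (intro divide_nonneg_pos) auto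
    then show ?thesis
      using 0 by simp
  next
    case (Suc J')
    then have "2 ^ (k * J') < n"
      using not_less_Least[of J' "\<lambda>J. n \<le> 2 ^ (k * J)"] J_def by fastforce
    then have "(2::real) ^ (k * J') < real n"
      by (metis of_nat_less_iff of_nat_numeral of_nat_power)
    then have "ln (2 ^ (k * J')) < ln (real n)"
      by simp
    then have "real J' * (real k * ln 2) < ln (real n)"
      by (simp add: ln_realpow mult_ac)
    then have "real J' < ln (real n) / (real k * ln 2)"
      using assms(1) by (simp add: pos_less_divide_eq)
    then show ?thesis
      using Suc by simp
  qed
  ultimately show ?thesis
    using that by blast
qed

lemma ln_ge_if_pow_le:
  assumes "3 \<le> k" "2 ^ (k - 1) \<le> n"
  shows "2 / 3 \<le> ln (real n) / (real k * ln 2)"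
proof -
  have "real (2 ^ (k - 1)) \<le> real n"
    using assms(2) by linarith
  then have "ln (2 ^ (k - 1)) \<le> ln (real n)"
    by (intro ln_mono) auto
  then have "(real k - 1) * ln 2 \<le> ln (real n)"
    using assms(1) by (simp add: ln_realpow of_nat_diff)
  moreover have "2 / 3 * real k * ln 2 \<le> (real k - 1) * ln 2"
    using assms(1) by (intro mult_right_mono) auto
  moreover have "0 < real k * ln 2"
    using assms(1) by simp
  ultimately show ?thesis
    unfolding pos_le_divide_eq[OF \<open>0 < real k * ln 2\<close>] by linarith
qed

theorem theorem1:
  "\<exists>C::real. \<forall>(k::nat) (n::nat) (A::nat set).
     k \<ge> 3 \<longrightarrow> n \<ge> 2 ^ (k - 1) \<longrightarrow> A \<subseteq> {1..n} \<longrightarrow>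
     \<not> contains_k_GP k (real ` A) \<longrightarrow>
     real n - real (card A) \<ge> gp_const k * real n - C * ln (real n) / real k"
proof (intro exI allI impI)
  fix k n :: nat and A :: "nat set"
  assume k: "k \<ge> 3" and n: "n \<ge> 2 ^ (k - 1)" and A: "A \<subseteq> {1..n}"
    and no_GP: "\<not> contains_k_GP k (real ` A)"
  define u where "u = ln (real n) / (real k * ln 2)"
  have "0 < k" "(0::nat) < 2 ^ (k - 1)"
    using k by simp_all
  with n have "0 < n"
    by linarith
  obtain J where J: "n \<le> 2 ^ (k * J)" "real J < 1 + u"
    using exists_dyadic_levels[OF \<open>0 < k\<close> \<open>0 < n\<close>] unfolding u_def by blast
  have "gp_const k * real n - 37 - 3 * real J \<le> real n - real (card A)"
    using GP_free_complement_ge[OF \<open>0 < k\<close> J(1) no_GP A] .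
  moreover have "2 / 3 \<le> u"
    using ln_ge_if_pow_le[OF k n] by (simp add: u_def)
  moreover have "63 / ln 2 * ln (real n) / real k = 63 * u"
    by (simp add: u_def)
  ultimately show "real n - real (card A) \<ge> gp_const k * real n - 63 / ln 2 * ln (real n) / real k"
    using J(2) by linarith \<comment> \<open>\<open>37 + 3 J < 40 + 3 u \<le> 63 u\<close>\<close>
qed

end
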